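(* Let $G$ be a graph on $n\ge 2$ vertices and let $P_4(G)$ be the number of paths of length $4$ in $G$ (subgraphs isomorphic to the path with $4$ edges). For distinct vertices $u,v$ let $d(u,v)$ be the number of vertices adjacent to both $u$ and $v$. Then $$P_4(G)\le \frac12\sum_{u\in V(G)}\sum_{v\in V(G),\,v\ne u} d(u)\,d(v)\,d(u,v),$$ and consequently, if $x_1\ge x_2\ge\cdots\ge x_n$ is the degree sequence of $G$ in non-increasing order, $$P_4(G)\le \sum_{i=1}^{n-1}\sum_{j=i+1}^{n} x_i x_j^2 .$$
   Context: $d(u)$ denotes the degree of vertex $u$ in $G$. *)

theory Defs
  imports Complex_Main
begin

definition simple_graph :: "'a set \<Rightarrow> ('a \<Rightarrow> 'a \<Rightarrow> bool) \<Rightarrow> bool" where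
  "simple_graph V E \<longleftrightarrow> finite V \<and> (\<forall>u v. E u v \<longrightarrow> E v u)
     \<and> (\<forall>u. \<not> E u u) \<and> (\<forall>u v. E u v \<longrightarrow> u \<in> V \<and> v \<in> V)"

definition deg :: "'a set \<Rightarrow> ('a \<Rightarrow> 'a \<Rightarrow> bool) \<Rightarrow> 'a \<Rightarrow> nat" where
  "deg V E u = card {v \<in> V. E u v}"

definition codeg :: "'a set \<Rightarrow> ('a \<Rightarrow> 'a \<Rightarrow> bool) \<Rightarrow> 'a \<Rightarrow> 'a \<Rightarrow> nat" where
  "codeg V E u v = card {w \<in> V. E u w \<and> E v w}"

(* Such a subgraph has no isolated vertices, so it is determined by its
   edge set {v0v1, v1v2, v2v3, v3v4} for 5 distinct vertices v0,...,v4
   with consecutive ones adjacent. *)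
definition P4 :: "'a set \<Rightarrow> ('a \<Rightarrow> 'a \<Rightarrow> bool) \<Rightarrow> nat" where
  "P4 V E = card {{{a,b},{b,c},{c,d},{d,e}} | a b c d e.
      a \<in> V \<and> b \<in> V \<and> c \<in> V \<and> d \<in> V \<and> e \<in> V \<and>
      distinct [a,b,c,d,e] \<and> E a b \<and> E b c \<and> E c d \<and> E d e}"

end

theory Submission
  imports Defs
begin

text \<open>Every path with four edges is traversed by exactly two sequences \<open>(a,b,c,d,e)\<close> of
  distinct vertices, one being the reverse of the other, so \<open>2 P\<^sub>4(G)\<close> is the number of such
  sequences. Recording a sequence as \<open>(b, d, a, c, e)\<close> injects it into the set of choices of
  distinct vertices \<open>b, d\<close>, a neighbour \<open>a\<close> of \<open>b\<close>, a common neighbour \<open>c\<close> and a neighbour \<open>e\<close>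
  of \<open>d\<close>; there are \<open>\<Sum>\<^sub>b\<^sub>\<noteq>\<^sub>d d(b) d(d) d(b,d)\<close> of these. For the second bound,
  \<open>d(u,v) \<le> min(d(u), d(v))\<close>, and in the resulting symmetric sum over ordered pairs each
  unordered pair \<open>i < j\<close> of sorted degrees contributes \<open>2 x\<^sub>i x\<^sub>j\<^sup>2\<close>.\<close>

lemma two_mul_card_image_le_card:
  assumes "finite T"
    and "\<And>t. t \<in> T \<Longrightarrow> r t \<in> T \<and> r t \<noteq> t \<and> f (r t) = f t"
  shows "2 * card (f ` T) \<le> card T"
proof -
  have "card T = (\<Sum>y\<in>f ` T. card {t\<in>T. f t = y})"
    using sum.image_gen[OF \<open>finite T\<close>, of "\<lambda>_. 1 :: nat" f] by simp
  moreover have "(\<Sum>y\<in>f ` T. 2) \<le> (\<Sum>y\<in>f ` T. card {t\<in>T. f t = y})"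
  proof (rule sum_mono)
    fix y assume "y \<in> f ` T"
    then obtain t where t: "t \<in> T" "f t = y" by auto
    have "2 = card {t, r t}" using assms(2)[OF t(1)] by auto
    also have "\<dots> \<le> card {t\<in>T. f t = y}"
      using t assms(2)[OF t(1)] \<open>finite T\<close> by (intro card_mono) auto
    finally show "2 \<le> card {t\<in>T. f t = y}" .
  qed
  ultimately show ?thesis by (simp add: mult.commute)
qed

lemma sum_off_diagonal_symmetric:
  fixes g :: "'a::linorder \<Rightarrow> 'a \<Rightarrow> 'b::semiring_1"
  assumes "finite I" and g_sym: "\<And>i j. g i j = g j i"
  shows "(\<Sum>i\<in>I. \<Sum>j\<in>I - {i}. g i j) = 2 * (\<Sum>i\<in>I. \<Sum>j\<in>{j\<in>I. i < j}. g i j)"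
proof -
  have "(\<Sum>j\<in>I - {i}. g i j) = (\<Sum>j\<in>{j\<in>I. i < j}. g i j) + (\<Sum>j\<in>{j\<in>I. j < i}. g i j)" for i
  proof -
    have "I - {i} = {j\<in>I. i < j} \<union> {j\<in>I. j < i}"
      and "{j\<in>I. i < j} \<inter> {j\<in>I. j < i} = {}" by auto
    then show ?thesis using \<open>finite I\<close> by (simp add: sum.union_disjoint)
  qed
  then have "(\<Sum>i\<in>I. \<Sum>j\<in>I - {i}. g i j)
      = (\<Sum>i\<in>I. \<Sum>j\<in>{j\<in>I. i < j}. g i j) + (\<Sum>i\<in>I. \<Sum>j\<in>{j\<in>I. j < i}. g i j)"
    by (simp add: sum.distrib)
  also have "(\<Sum>i\<in>I. \<Sum>j\<in>{j\<in>I. j < i}. g i j) = (\<Sum>j\<in>I. \<Sum>i\<in>{i\<in>I. j < i}. g i j)"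
    by (rule sum.swap_restrict[OF \<open>finite I\<close> \<open>finite I\<close>])
  also have "\<dots> = (\<Sum>i\<in>I. \<Sum>j\<in>{j\<in>I. i < j}. g i j)"
    by (simp add: g_sym)
  finally show ?thesis by (simp add: mult_2)
qed

lemma sum_off_diagonal_reindex:
  assumes "bij_betw \<sigma> I V"
  shows "(\<Sum>u\<in>V. \<Sum>v\<in>V - {u}. h u v) = (\<Sum>i\<in>I. \<Sum>j\<in>I - {i}. h (\<sigma> i) (\<sigma> j))"
proof -
  have "(\<Sum>u\<in>V. \<Sum>v\<in>V - {u}. h u v) = (\<Sum>i\<in>I. \<Sum>v\<in>V - {\<sigma> i}. h (\<sigma> i) v)"
    using sum.reindex_bij_betw[OF assms, of "\<lambda>u. \<Sum>v\<in>V - {u}. h u v"] by simp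
  also have "\<dots> = (\<Sum>i\<in>I. \<Sum>j\<in>I - {i}. h (\<sigma> i) (\<sigma> j))"
  proof (rule sum.cong[OF refl])
    fix i assume "i \<in> I"
    then have "bij_betw \<sigma> (I - {i}) (V - {\<sigma> i})"
      using bij_betw_DiffI[OF assms, of "{i}" "{\<sigma> i}"] assms by (auto simp: bij_betw_def)
    then show "(\<Sum>v\<in>V - {\<sigma> i}. h (\<sigma> i) v) = (\<Sum>j\<in>I - {i}. h (\<sigma> i) (\<sigma> j))"
      by (simp add: sum.reindex_bij_betw)
  qed
  finally show ?thesis .
qed

lemma sum_upper_triangle_drop_last:
  fixes n :: nat and f :: "nat \<Rightarrow> nat \<Rightarrow> 'b::comm_monoid_add"
  shows "(\<Sum>i=1..n. \<Sum>j=i+1..n. f i j) = (\<Sum>i=1..n - 1. \<Sum>j=i+1..n. f i j)"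
  by (cases n) (simp_all add: sum.cl_ivl_Suc)

lemma simple_graph_finite: "simple_graph V E \<Longrightarrow> finite V"
  by (simp add: simple_graph_def)

lemma simple_graph_sym: "simple_graph V E \<Longrightarrow> E u v \<Longrightarrow> E v u"
  by (simp add: simple_graph_def)

definition P4_sequences :: "'a set \<Rightarrow> ('a \<Rightarrow> 'a \<Rightarrow> bool) \<Rightarrow> ('a \<times> 'a \<times> 'a \<times> 'a \<times> 'a) set" where
  "P4_sequences V E = {(a,b,c,d,e). a \<in> V \<and> b \<in> V \<and> c \<in> V \<and> d \<in> V \<and> e \<in> V \<and>
      distinct [a,b,c,d,e] \<and> E a b \<and> E b c \<and> E c d \<and> E d e}"

definition path_edges :: "'a \<times> 'a \<times> 'a \<times> 'a \<times> 'a \<Rightarrow> 'a set set" where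
  "path_edges = (\<lambda>(a,b,c,d,e). {{a,b},{b,c},{c,d},{d,e}})"

lemma path_edges_rev: "path_edges (e,d,c,b,a) = path_edges (a,b,c,d,e)"
  unfolding path_edges_def by (simp add: insert_commute)

lemma P4_eq_card_path_edges:
  "P4 V E = card (path_edges ` P4_sequences V E)"
  unfolding P4_def
proof (intro arg_cong[where f = card] set_eqI iffI)
  fix x assume "x \<in> {{{a,b},{b,c},{c,d},{d,e}} | a b c d e.
      a \<in> V \<and> b \<in> V \<and> c \<in> V \<and> d \<in> V \<and> e \<in> V \<and>
      distinct [a,b,c,d,e] \<and> E a b \<and> E b c \<and> E c d \<and> E d e}"
  then obtain a b c d e where "x = path_edges (a,b,c,d,e)" "(a,b,c,d,e) \<in> P4_sequences V E"
    unfolding P4_sequences_def path_edges_def by auto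
  then show "x \<in> path_edges ` P4_sequences V E" by blast
qed (auto simp: P4_sequences_def path_edges_def; blast)

lemma finite_P4_sequences:
  assumes "simple_graph V E"
  shows "finite (P4_sequences V E)"
  by (rule finite_subset[of _ "V \<times> V \<times> V \<times> V \<times> V"])
    (auto simp: P4_sequences_def simple_graph_finite[OF assms])

lemma two_mul_P4_le_card_P4_sequences:
  assumes G: "simple_graph V E"
  shows "2 * P4 V E \<le> card (P4_sequences V E)"
  unfolding P4_eq_card_path_edges
proof (rule two_mul_card_image_le_card[OF finite_P4_sequences[OF G]])
  fix t assume "t \<in> P4_sequences V E"
  then obtain a b c d e where t: "t = (a,b,c,d,e)" and "a \<in> V \<and> b \<in> V \<and> c \<in> V \<and> d \<in> V \<and> e \<in> V \<and>
      distinct [a,b,c,d,e] \<and> E a b \<and> E b c \<and> E c d \<and> E d e"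
    unfolding P4_sequences_def by auto
  then have "(e,d,c,b,a) \<in> P4_sequences V E" and "(e,d,c,b,a) \<noteq> t"
    using simple_graph_sym[OF G] by (auto simp: P4_sequences_def)
  then show "(\<lambda>(a,b,c,d,e). (e,d,c,b,a)) t \<in> P4_sequences V E
      \<and> (\<lambda>(a,b,c,d,e). (e,d,c,b,a)) t \<noteq> t
      \<and> path_edges ((\<lambda>(a,b,c,d,e). (e,d,c,b,a)) t) = path_edges t"
    unfolding t by (simp add: path_edges_rev)
qed

lemma card_P4_sequences_le:
  assumes G: "simple_graph V E"
  shows "card (P4_sequences V E) \<le> (\<Sum>u\<in>V. \<Sum>v\<in>V - {u}. deg V E u * deg V E v * codeg V E u v)"
proof -
  note finV = simple_graph_finite[OF G]
  define S where "S = (SIGMA b:V. SIGMA d:V - {b}.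
      {a\<in>V. E b a} \<times> ({c\<in>V. E b c \<and> E d c} \<times> {e\<in>V. E d e}))"
  have "card (P4_sequences V E) \<le> card S"
  proof (rule card_inj_on_le[of "\<lambda>(a,b,c,d,e). (b,d,a,c,e)"])
    show "inj_on (\<lambda>(a,b,c,d,e). (b,d,a,c,e)) (P4_sequences V E)"
      by (auto simp: inj_on_def)
    show "(\<lambda>(a,b,c,d,e). (b,d,a,c,e)) ` P4_sequences V E \<subseteq> S"
      using simple_graph_sym[OF G] by (auto simp: P4_sequences_def S_def)
    show "finite S" using finV by (simp add: S_def)
  qed
  also have "card S = (\<Sum>u\<in>V. \<Sum>v\<in>V - {u}. deg V E u * deg V E v * codeg V E u v)"
    using finV by (simp add: S_def card_cartesian_product deg_def codeg_def mult_ac)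
  finally show ?thesis .
qed

lemma codeg_le_deg:
  assumes "finite V"
  shows "codeg V E u v \<le> deg V E u" and "codeg V E u v \<le> deg V E v"
  using assms unfolding codeg_def deg_def by (auto intro: card_mono)

lemma sum_deg_codeg_le_sorted_degrees:
  assumes "finite V"
    and \<sigma>: "bij_betw \<sigma> {1..card V} V"
    and x: "\<forall>i\<in>{1..card V}. x i = deg V E (\<sigma> i)"
    and sorted: "\<forall>i j. 1 \<le> i \<longrightarrow> i \<le> j \<longrightarrow> j \<le> card V \<longrightarrow> x j \<le> x i"
  shows "(\<Sum>u\<in>V. \<Sum>v\<in>V - {u}. deg V E u * deg V E v * codeg V E u v)
     \<le> 2 * (\<Sum>i=1..card V - 1. \<Sum>j=i+1..card V. x i * (x j)^2)"
proof -
  define n where "n = card V"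
  define g where "g = (\<lambda>i j. x i * x j * min (x i) (x j))"
  have "(\<Sum>u\<in>V. \<Sum>v\<in>V - {u}. deg V E u * deg V E v * codeg V E u v)
      \<le> (\<Sum>u\<in>V. \<Sum>v\<in>V - {u}. deg V E u * deg V E v * min (deg V E u) (deg V E v))"
    using codeg_le_deg[OF \<open>finite V\<close>] by (intro sum_mono) simp
  also have "\<dots> = (\<Sum>i\<in>{1..n}. \<Sum>j\<in>{1..n} - {i}. g i j)"
    using x by (simp add: sum_off_diagonal_reindex[OF \<sigma>] g_def n_def)
  also have "\<dots> = 2 * (\<Sum>i\<in>{1..n}. \<Sum>j\<in>{j\<in>{1..n}. i < j}. g i j)"
    by (rule sum_off_diagonal_symmetric) (simp_all add: g_def mult.commute min.commute)
  also have "(\<Sum>i\<in>{1..n}. \<Sum>j\<in>{j\<in>{1..n}. i < j}. g i j) = (\<Sum>i=1..n. \<Sum>j=i+1..n. x i * (x j)^2)"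
  proof (intro sum.cong)
    fix i j assume "i \<in> {1..n}" "j \<in> {i+1..n}"
    then have "x j \<le> x i" using sorted by (auto simp: n_def)
    then show "g i j = x i * (x j)^2" by (simp add: g_def min_def power2_eq_square)
  qed auto
  also have "\<dots> = (\<Sum>i=1..n - 1. \<Sum>j=i+1..n. x i * (x j)^2)"
    by (rule sum_upper_triangle_drop_last)
  finally show ?thesis unfolding n_def .
qed

theorem mainTheorem2:
  fixes V :: "'a set" and E :: "'a \<Rightarrow> 'a \<Rightarrow> bool"
  assumes G: "simple_graph V E"
    and n2: "card V \<ge> 2"
  shows "real (P4 V E) \<le> (1/2) * (\<Sum>u\<in>V. \<Sum>v\<in>V - {u}.
            real (deg V E u) * real (deg V E v) * real (codeg V E u v))
    \<and> (\<forall>\<sigma> x. bij_betw \<sigma> {1..card V} V \<longrightarrow> (\<forall>i\<in>{1..card V}. x i = deg V E (\<sigma> i))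
           \<longrightarrow> (\<forall>i j. 1 \<le> i \<longrightarrow> i \<le> j \<longrightarrow> j \<le> card V \<longrightarrow> x j \<le> x i)
           \<longrightarrow> P4 V E \<le> (\<Sum>i=1..card V - 1. \<Sum>j=i+1..card V. x i * (x j)^2))"
proof -
  have P4_bound: "2 * P4 V E \<le> (\<Sum>u\<in>V. \<Sum>v\<in>V - {u}. deg V E u * deg V E v * codeg V E u v)"
    using two_mul_P4_le_card_P4_sequences[OF G] card_P4_sequences_le[OF G] by linarith
  then have "real (2 * P4 V E) \<le> real (\<Sum>u\<in>V. \<Sum>v\<in>V - {u}. deg V E u * deg V E v * codeg V E u v)"
    by (simp only: of_nat_le_iff)
  moreover have "P4 V E \<le> (\<Sum>i=1..card V - 1. \<Sum>j=i+1..card V. x i * (x j)^2)"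
    if "bij_betw \<sigma> {1..card V} V" and "\<forall>i\<in>{1..card V}. x i = deg V E (\<sigma> i)"
      and "\<forall>i j. 1 \<le> i \<longrightarrow> i \<le> j \<longrightarrow> j \<le> card V \<longrightarrow> x j \<le> x i" for \<sigma> x
    using P4_bound sum_deg_codeg_le_sorted_degrees[OF simple_graph_finite[OF G] that] by linarith
  ultimately show ?thesis by simp
qed

end
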